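(* Let $G=(V=[n],E,(p_{uv})_{(u,v)\in E})$ be an influence graph, $k\in\{2,\dots,n\}$, $\pi$ an optimal adaptive policy with $|\pi|=k$, and $x_v$ the probability that node $v$ is selected by $\pi$. Then for every $S\subseteq V$, $$\mathbb{E}_{\mathbf L,\hat{\mathbf L}}\big[\sigma_{\mathbf L^2(dom(\hat\Psi_\pi)\cup S)}(dom(\hat\Psi_\pi)\cup S)\big]\le\sigma^2(S)+\sum_{v\in V\setminus S}x_v\,\Delta^2_S(v).$$
   Context: $G$ is a directed graph with activation probabilities $p_{uv}\in[0,1]$. $\mathbf L,\hat{\mathbf L}$ are independent random subsets of $E$, each containing every edge $(u,v)$ independently with probability $p_{uv}$. For $L\subseteq E$, $T\subseteq V$, $\sigma_L(T)$ is the number of nodes reachable by a directed path (length $\ge0$) in $(V,L)$ from $T$; $\sigma(T):=\mathbb{E}[\sigma_{\mathbf L}(T)]$. For $T\subseteq V$, $\mathbf L^2(T):=\mathbf L\cup(\hat{\mathbf L}\cap\{(u,w)\in E:u\in T\})$, $\sigma^2(T):=\mathbb{E}[\sigma_{\mathbf L^2(T)}(T)]$, and $\Delta^2_S(v):=\mathbb{E}[\sigma_{\mathbf L^2(\{v\})}(S\cup\{v\})-\sigma_{\mathbf L}(S)]$. Realisations: $\Phi(v):=\{v\}\cup\{z:(v,z)\in\mathbf L\}$ and $\hat\Phi(v):=\{v\}\cup\{z:(v,z)\in\hat{\mathbf L}\}$; a partial realisation is the restriction of $v\mapsto\{v\}\cup\{z:(v,z)\in L\}$ (for some $L\subseteq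 E$) to a subset $dom(\psi)$ of $V$. An adaptive policy $\pi$ maps partial realisations to a node or STOP; it is run from $\psi=\emptyset$, and while $\pi(\psi)=v\ne$ STOP it sets $\psi\leftarrow\psi\cup\{(v,\Phi(v))\}$, ending with $\Psi_\pi$; $\sigma(\pi):=\mathbb{E}[\sigma_{\mathbf L}(dom(\Psi_\pi))]$; $|\pi|=k$ means $|dom(\Psi_\pi)|=k$ always; $\pi$ is optimal if it maximizes $\sigma(\pi)$ among policies with $|\pi|=k$. $\hat\Psi_\pi$ denotes the final partial realisation when $\pi$ is run with feedback $\hat\Phi(v)$ instead of $\Phi(v)$. *)

theory Defs
  imports Complex_Main
begin

text \<open>Influence graph on vertex set V = {1..n}, edge set E, activation probabilities p.
  Random edge sets are modelled exactly: every L \<subseteq> E has probability prL E p L,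
  and expectations are finite weighted sums.\<close>

definition influence_graph :: "nat \<Rightarrow> (nat \<times> nat) set \<Rightarrow> (nat \<times> nat \<Rightarrow> real) \<Rightarrow> bool" where
  "influence_graph n E p \<longleftrightarrow> E \<subseteq> {1..n} \<times> {1..n} \<and> (\<forall>e\<in>E. 0 \<le> p e \<and> p e \<le> 1)"

definition prL :: "(nat \<times> nat) set \<Rightarrow> (nat \<times> nat \<Rightarrow> real) \<Rightarrow> (nat \<times> nat) set \<Rightarrow> real" where
  "prL E p L = (\<Prod>e\<in>L. p e) * (\<Prod>e\<in>E - L. 1 - p e)"

definition expect :: "(nat \<times> nat) set \<Rightarrow> (nat \<times> nat \<Rightarrow> real) \<Rightarrow> ((nat \<times> nat) set \<Rightarrow> real) \<Rightarrow> real" where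
  "expect E p f = (\<Sum>L\<in>Pow E. prL E p L * f L)"

definition reach :: "(nat \<times> nat) set \<Rightarrow> nat set \<Rightarrow> nat set" where
  "reach L T = {z. \<exists>t\<in>T. (t, z) \<in> L\<^sup>*}"

definition sigmaL :: "(nat \<times> nat) set \<Rightarrow> nat set \<Rightarrow> real" where
  "sigmaL L T = real (card (reach L T))"

definition sigma :: "(nat \<times> nat) set \<Rightarrow> (nat \<times> nat \<Rightarrow> real) \<Rightarrow> nat set \<Rightarrow> real" where
  "sigma E p T = expect E p (\<lambda>L. sigmaL L T)"

definition L2 :: "(nat \<times> nat) set \<Rightarrow> nat set \<Rightarrow> (nat \<times> nat) set \<Rightarrow> (nat \<times> nat) set \<Rightarrow> (nat \<times> nat) set" where
  "L2 E T L Lh = L \<union> (Lh \<inter> {(u, w). (u, w) \<in> E \<and> u \<in> T})"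

definition sigma2 :: "(nat \<times> nat) set \<Rightarrow> (nat \<times> nat \<Rightarrow> real) \<Rightarrow> nat set \<Rightarrow> real" where
  "sigma2 E p T = expect E p (\<lambda>L. expect E p (\<lambda>Lh. sigmaL (L2 E T L Lh) T))"

definition Delta2 :: "(nat \<times> nat) set \<Rightarrow> (nat \<times> nat \<Rightarrow> real) \<Rightarrow> nat set \<Rightarrow> nat \<Rightarrow> real" where
  "Delta2 E p S v = expect E p (\<lambda>L. expect E p (\<lambda>Lh.
      sigmaL (L2 E {v} L Lh) (S \<union> {v}) - sigmaL L S))"

definition Phi :: "(nat \<times> nat) set \<Rightarrow> nat \<Rightarrow> nat set" where
  "Phi L v = {v} \<union> {z. (v, z) \<in> L}"

type_synonym prealis = "nat \<Rightarrow> nat set option"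
type_synonym policy = "prealis \<Rightarrow> nat option"  \<comment> \<open>None = STOP\<close>

definition is_policy :: "nat \<Rightarrow> policy \<Rightarrow> bool" where
  "is_policy n \<pi> \<longleftrightarrow> (\<forall>\<psi> v. \<pi> \<psi> = Some v \<longrightarrow> v \<in> {1..n})"

fun run_steps :: "policy \<Rightarrow> (nat \<times> nat) set \<Rightarrow> nat \<Rightarrow> prealis" where
  "run_steps \<pi> L 0 = Map.empty"
| "run_steps \<pi> L (Suc m) =
     (let \<psi> = run_steps \<pi> L m in
      case \<pi> \<psi> of None \<Rightarrow> \<psi> | Some v \<Rightarrow> \<psi>(v \<mapsto> Phi L v))"

definition terminates :: "policy \<Rightarrow> (nat \<times> nat) set \<Rightarrow> bool" where
  "terminates \<pi> L \<longleftrightarrow> (\<exists>m. \<pi> (run_steps \<pi> L m) = None)"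

definition final_real :: "policy \<Rightarrow> (nat \<times> nat) set \<Rightarrow> prealis" where
  "final_real \<pi> L = run_steps \<pi> L (LEAST m. \<pi> (run_steps \<pi> L m) = None)"

definition policy_size :: "(nat \<times> nat) set \<Rightarrow> policy \<Rightarrow> nat \<Rightarrow> bool" where
  "policy_size E \<pi> k \<longleftrightarrow> (\<forall>L\<subseteq>E. terminates \<pi> L \<and> card (dom (final_real \<pi> L)) = k)"

definition sigma_pol :: "(nat \<times> nat) set \<Rightarrow> (nat \<times> nat \<Rightarrow> real) \<Rightarrow> policy \<Rightarrow> real" where
  "sigma_pol E p \<pi> = expect E p (\<lambda>L. sigmaL L (dom (final_real \<pi> L)))"

definition optimal_policy :: "nat \<Rightarrow> (nat \<times> nat) set \<Rightarrow> (nat \<times> nat \<Rightarrow> real) \<Rightarrow> nat \<Rightarrow> policy \<Rightarrow> bool" where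
  "optimal_policy n E p k \<pi> \<longleftrightarrow> is_policy n \<pi> \<and> policy_size E \<pi> k \<and>
     (\<forall>\<pi>'. is_policy n \<pi>' \<and> policy_size E \<pi>' k \<longrightarrow> sigma_pol E p \<pi>' \<le> sigma_pol E p \<pi>)"

definition sel_prob :: "(nat \<times> nat) set \<Rightarrow> (nat \<times> nat \<Rightarrow> real) \<Rightarrow> policy \<Rightarrow> nat \<Rightarrow> real" where
  "sel_prob E p \<pi> v = expect E p (\<lambda>L. if v \<in> dom (final_real \<pi> L) then 1 else 0)"

end

theory Submission
  imports Defs
begin

text \<open>Every node reached in the doubly activated graph from the selected set \<open>D\<close> together with
  \<open>S\<close> is either reached from \<open>S\<close> alone with a second chance on the out-edges of \<open>S\<close>, or is a
  node newly reached from some \<open>v \<in> D - S\<close> with a second chance on the out-edges of \<open>v\<close> only.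
  Counting gives a pointwise bound whose \<open>v\<close>-th term carries the indicator of \<open>v \<in> D\<close>.
  Taking expectations, that indicator depends on the second realisation \<open>Lh\<close> only through
  edges not leaving \<open>v\<close> (a policy cannot observe the out-edges of \<open>v\<close> before it selects \<open>v\<close>),
  while the marginal gain depends on \<open>Lh\<close> only through the out-edges of \<open>v\<close>; by independence
  the expectation of the product factors into \<open>x\<^sub>v \<Delta>\<^sup>2\<^sub>S(v)\<close>.\<close>

lemma prL_sum_Pow: "finite A \<Longrightarrow> (\<Sum>L\<in>Pow A. prL A p L) = 1"
  using prod_add[of A p "\<lambda>e. 1 - p e"] by (simp add: prL_def)

lemma prL_nonneg: "\<forall>e\<in>E. 0 \<le> p e \<and> p e \<le> 1 \<Longrightarrow> L \<subseteq> E \<Longrightarrow> 0 \<le> prL E p L"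
  unfolding prL_def by (intro mult_nonneg_nonneg prod_nonneg) auto

lemma prL_Un:
  assumes "finite E" "A \<subseteq> E" "M1 \<subseteq> A" "M2 \<subseteq> E - A"
  shows "prL E p (M1 \<union> M2) = prL A p M1 * prL (E - A) p M2"
proof -
  have fin: "finite A" "finite (E - A)" using assms finite_subset by auto
  have compl: "E - (M1 \<union> M2) = (A - M1) \<union> ((E - A) - M2)" using assms by auto
  have "(\<Prod>e\<in>M1 \<union> M2. p e) = (\<Prod>e\<in>M1. p e) * (\<Prod>e\<in>M2. p e)"
    by (rule prod.union_disjoint) (use assms fin in \<open>auto intro: finite_subset\<close>)
  moreover have "(\<Prod>e\<in>E - (M1 \<union> M2). 1 - p e)
      = (\<Prod>e\<in>A - M1. 1 - p e) * (\<Prod>e\<in>(E - A) - M2. 1 - p e)"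
    unfolding compl by (rule prod.union_disjoint) (use assms fin in auto)
  ultimately show ?thesis by (simp add: prL_def mult_ac)
qed

lemma expect_split:
  assumes "finite E" "A \<subseteq> E"
  shows "expect E p F =
    (\<Sum>M1\<in>Pow A. \<Sum>M2\<in>Pow (E - A). prL A p M1 * prL (E - A) p M2 * F (M1 \<union> M2))"
proof -
  have bij: "bij_betw (\<lambda>(M1, M2). M1 \<union> M2) (Pow A \<times> Pow (E - A)) (Pow E)"
    by (rule bij_betw_byWitness[where f' = "\<lambda>L. (L \<inter> A, L - A)"]) (use assms in auto)
  have "(\<Sum>M1\<in>Pow A. \<Sum>M2\<in>Pow (E - A). prL A p M1 * prL (E - A) p M2 * F (M1 \<union> M2))
      = (\<Sum>(M1, M2)\<in>Pow A \<times> Pow (E - A). prL E p (M1 \<union> M2) * F (M1 \<union> M2))"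
    by (subst sum.cartesian_product) (auto intro!: sum.cong simp: prL_Un[OF assms])
  also have "\<dots> = (\<Sum>L\<in>Pow E. prL E p L * F L)"
    using sum.reindex_bij_betw[OF bij, of "\<lambda>L. prL E p L * F L"] by (simp add: case_prod_unfold)
  finally show ?thesis by (simp add: expect_def)
qed

lemma expect_mult_factor:
  assumes "finite E" "A \<subseteq> E"
    and h: "\<And>L. L \<subseteq> E \<Longrightarrow> h L = h (L \<inter> A)"
    and f: "\<And>L. L \<subseteq> E \<Longrightarrow> f L = f (L - A)"
  shows "expect E p (\<lambda>L. h L * f L) =
    (\<Sum>M\<in>Pow A. prL A p M * h M) * (\<Sum>M\<in>Pow (E - A). prL (E - A) p M * f M)"
proof -
  have "h (M1 \<union> M2) = h M1 \<and> f (M1 \<union> M2) = f M2" if "M1 \<subseteq> A" "M2 \<subseteq> E - A" for M1 M2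
  proof -
    have "(M1 \<union> M2) \<inter> A = M1" "(M1 \<union> M2) - A = M2" "M1 \<union> M2 \<subseteq> E" using that assms by auto
    then show ?thesis using h[of "M1 \<union> M2"] f[of "M1 \<union> M2"] by simp
  qed
  then have "expect E p (\<lambda>L. h L * f L) =
      (\<Sum>M1\<in>Pow A. \<Sum>M2\<in>Pow (E - A). (prL A p M1 * h M1) * (prL (E - A) p M2 * f M2))"
    by (subst expect_split[OF assms(1,2)]) (auto intro!: sum.cong simp: mult_ac)
  then show ?thesis by (simp add: sum_product)
qed

lemma expect_mult_indep:
  assumes "finite E" "A \<subseteq> E"
    and h: "\<And>L. L \<subseteq> E \<Longrightarrow> h L = h (L \<inter> A)"
    and f: "\<And>L. L \<subseteq> E \<Longrightarrow> f L = f (L - A)"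
  shows "expect E p (\<lambda>L. h L * f L) = expect E p h * expect E p f"
proof -
  have fin: "finite A" "finite (E - A)" using assms finite_subset by auto
  have "expect E p (\<lambda>L. h L * 1) =
      (\<Sum>M\<in>Pow A. prL A p M * h M) * (\<Sum>M\<in>Pow (E - A). prL (E - A) p M * 1)"
    by (rule expect_mult_factor[where h = h and f = "\<lambda>_. 1", OF assms(1,2) h]) simp_all
  then have "expect E p h = (\<Sum>M\<in>Pow A. prL A p M * h M)"
    using prL_sum_Pow[OF fin(2)] by simp
  moreover have "expect E p (\<lambda>L. 1 * f L) =
      (\<Sum>M\<in>Pow A. prL A p M * 1) * (\<Sum>M\<in>Pow (E - A). prL (E - A) p M * f M)"
    by (rule expect_mult_factor[where h = "\<lambda>_. 1" and f = f, OF assms(1,2) _ f]) simp_all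
  then have "expect E p f = (\<Sum>M\<in>Pow (E - A). prL (E - A) p M * f M)"
    using prL_sum_Pow[OF fin(1)] by simp
  ultimately show ?thesis using expect_mult_factor[where h = h and f = f, OF assms] by simp
qed

lemma expect_add: "expect E p (\<lambda>L. a L + b L) = expect E p a + expect E p b"
  by (simp add: expect_def distrib_left sum.distrib)

lemma expect_sum: "expect E p (\<lambda>L. \<Sum>v\<in>V. F v L) = (\<Sum>v\<in>V. expect E p (F v))"
  by (simp add: expect_def sum_distrib_left) (rule sum.swap)

lemma expect_cmult: "expect E p (\<lambda>L. c * f L) = c * expect E p f"
  by (simp add: expect_def sum_distrib_left mult_ac)

lemma expect_mono:
  assumes "\<forall>e\<in>E. 0 \<le> p e \<and> p e \<le> 1" "\<And>L. L \<subseteq> E \<Longrightarrow> a L \<le> b L"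
  shows "expect E p a \<le> expect E p b"
  unfolding expect_def by (rule sum_mono, rule mult_left_mono) (use assms prL_nonneg in auto)

lemma run_steps_stopped: "\<pi> (run_steps \<pi> L m) = None \<Longrightarrow> run_steps \<pi> L (m + j) = run_steps \<pi> L m"
  by (induction j) auto

lemma final_real_eq_run_steps:
  assumes "terminates \<pi> L" "(LEAST m. \<pi> (run_steps \<pi> L m) = None) \<le> m"
  shows "final_real \<pi> L = run_steps \<pi> L m"
proof -
  let ?m0 = "LEAST m. \<pi> (run_steps \<pi> L m) = None"
  have "\<pi> (run_steps \<pi> L ?m0) = None"
    using assms(1) unfolding terminates_def by (rule LeastI_ex)
  from run_steps_stopped[where \<pi> = \<pi> and L = L and m = ?m0 and j = "m - ?m0", OF this] assms(2)
  show ?thesis by (simp add: final_real_def)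
qed

lemma dom_run_steps_mono: "m \<le> m' \<Longrightarrow> dom (run_steps \<pi> L m) \<subseteq> dom (run_steps \<pi> L m')"
proof (induction m' rule: dec_induct)
  case (step m')
  then show ?case by (auto simp: Let_def split: option.splits)
qed simp

lemma dom_run_steps_subset: "is_policy n \<pi> \<Longrightarrow> dom (run_steps \<pi> L m) \<subseteq> {1..n}"
  by (induction m) (auto simp: Let_def is_policy_def split: option.splits)

lemma dom_final_real_subset: "is_policy n \<pi> \<Longrightarrow> dom (final_real \<pi> L) \<subseteq> {1..n}"
  unfolding final_real_def by (rule dom_run_steps_subset)

lemma run_steps_cong_unselected:
  assumes "\<And>u. u \<noteq> v \<Longrightarrow> Phi M1 u = Phi M2 u"
  shows "v \<notin> dom (run_steps \<pi> M1 m) \<Longrightarrow> run_steps \<pi> M1 m = run_steps \<pi> M2 m"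
proof (induction m)
  case (Suc m)
  have "v \<notin> dom (run_steps \<pi> M1 m)"
    using Suc.prems dom_run_steps_mono[of m "Suc m" \<pi> M1] by auto
  then have IH: "run_steps \<pi> M1 m = run_steps \<pi> M2 m" using Suc.IH by simp
  show ?case
  proof (cases "\<pi> (run_steps \<pi> M1 m)")
    case None
    then show ?thesis using IH by simp
  next
    case (Some u)
    then have "u \<noteq> v" using Suc.prems by (auto simp: Let_def)
    then show ?thesis using Some IH assms by (simp add: Let_def)
  qed
qed simp

lemma selected_cong:
  assumes "terminates \<pi> M1" "terminates \<pi> M2" "\<And>u. u \<noteq> v \<Longrightarrow> Phi M1 u = Phi M2 u"
  shows "v \<in> dom (final_real \<pi> M1) \<longleftrightarrow> v \<in> dom (final_real \<pi> M2)"
proof -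
  define m where "m = max (LEAST m. \<pi> (run_steps \<pi> M1 m) = None)
                          (LEAST m. \<pi> (run_steps \<pi> M2 m) = None)"
  have "final_real \<pi> M1 = run_steps \<pi> M1 m" "final_real \<pi> M2 = run_steps \<pi> M2 m"
    by (rule final_real_eq_run_steps, fact, simp add: m_def)+
  moreover have "v \<notin> dom (run_steps \<pi> M1 m) \<Longrightarrow> run_steps \<pi> M1 m = run_steps \<pi> M2 m"
    by (rule run_steps_cong_unselected[OF assms(3)])
  moreover have "v \<notin> dom (run_steps \<pi> M2 m) \<Longrightarrow> run_steps \<pi> M2 m = run_steps \<pi> M1 m"
    by (rule run_steps_cong_unselected[where v = v]) (use assms(3) in metis)
  ultimately show ?thesis by metis
qed

lemma reach_mono: "L \<subseteq> L' \<Longrightarrow> T \<subseteq> T' \<Longrightarrow> reach L T \<subseteq> reach L' T'"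
  unfolding reach_def using rtrancl_mono by blast

lemma reach_base: "t \<in> T \<Longrightarrow> t \<in> reach L T"
  unfolding reach_def by auto

lemma reach_step: "z \<in> reach L T \<Longrightarrow> (z, y) \<in> L \<Longrightarrow> y \<in> reach L T"
  unfolding reach_def using rtrancl.rtrancl_into_rtrancl by fastforce

lemma reach_subset: "L \<subseteq> V \<times> V \<Longrightarrow> reach L T \<subseteq> T \<union> V"
proof
  fix z assume "L \<subseteq> V \<times> V" "z \<in> reach L T"
  then obtain t where "t \<in> T" "(t, z) \<in> L\<^sup>*" unfolding reach_def by blast
  from \<open>(t, z) \<in> L\<^sup>*\<close> show "z \<in> T \<union> V"
    by (cases rule: rtranclE) (use \<open>t \<in> T\<close> \<open>L \<subseteq> V \<times> V\<close> in auto)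
qed

lemma finite_reach: "L \<subseteq> V \<times> V \<Longrightarrow> finite V \<Longrightarrow> finite T \<Longrightarrow> finite (reach L T)"
  by (rule finite_subset[OF reach_subset]) auto

lemma L2_singleton_Int_out_edges: "L2 E {v} L (Lh \<inter> {(u, w) \<in> E. u = v}) = L2 E {v} L Lh"
  by (auto simp: L2_def)

lemma rtrancl_L2_Un_cases:
  assumes "(t, z) \<in> (L2 E (D \<union> S) L Lh)\<^sup>*" "t \<in> D \<union> S"
  shows "z \<in> reach (L2 E S L Lh) S \<or> (\<exists>v\<in>D - S. z \<in> reach (L2 E {v} L Lh) {v})"
  using assms(1)
proof (induction rule: rtrancl_induct)
  case base
  then show ?case using assms(2) reach_base by blast
next
  case (step y z)
  have L_sub: "L \<subseteq> L2 E S L Lh" "\<And>v. L \<subseteq> L2 E {v} L Lh" by (auto simp: L2_def)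
  from step.hyps(2) consider "(y, z) \<in> L" | "(y, z) \<in> Lh" "(y, z) \<in> E" "y \<in> D \<union> S"
    by (auto simp: L2_def)
  then show ?case
  proof cases
    case 1
    then show ?thesis using step.IH L_sub reach_step by blast
  next
    case 2
    show ?thesis
    proof (cases "y \<in> S")
      case True
      then have "(y, z) \<in> L2 E S L Lh" using 2 by (auto simp: L2_def)
      then show ?thesis using True reach_base reach_step by metis
    next
      case False
      then have "(y, z) \<in> L2 E {y} L Lh" using 2 by (auto simp: L2_def)
      then have "z \<in> reach (L2 E {y} L Lh) {y}" using reach_base reach_step by (metis singletonI)
      then show ?thesis using False 2 by blast
    qed
  qed
qed

lemma reach_L2_Un_subset:
  "reach (L2 E (D \<union> S) L Lh) (D \<union> S) \<subseteq>
     reach (L2 E S L Lh) S \<union> (\<Union>v\<in>D - S. reach (L2 E {v} L Lh) (S \<union> {v}) - reach L S)"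
proof
  fix z assume "z \<in> reach (L2 E (D \<union> S) L Lh) (D \<union> S)"
  then obtain t where "t \<in> D \<union> S" "(t, z) \<in> (L2 E (D \<union> S) L Lh)\<^sup>*" by (auto simp: reach_def)
  then have z: "z \<in> reach (L2 E S L Lh) S \<or> (\<exists>v\<in>D - S. z \<in> reach (L2 E {v} L Lh) {v})"
    using rtrancl_L2_Un_cases by blast
  have "reach L S \<subseteq> reach (L2 E S L Lh) S" by (rule reach_mono) (auto simp: L2_def)
  moreover have "reach (L2 E {v} L Lh) {v} \<subseteq> reach (L2 E {v} L Lh) (S \<union> {v})" for v
    by (rule reach_mono) auto
  ultimately show "z \<in> reach (L2 E S L Lh) S \<union>
      (\<Union>v\<in>D - S. reach (L2 E {v} L Lh) (S \<union> {v}) - reach L S)"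
    using z by blast
qed

lemma card_reach_L2_Un_le:
  assumes "finite V" "E \<subseteq> V \<times> V" "L \<subseteq> E" "finite D" "finite S"
  shows "card (reach (L2 E (D \<union> S) L Lh) (D \<union> S)) \<le> card (reach (L2 E S L Lh) S) +
    (\<Sum>v\<in>D - S. card (reach (L2 E {v} L Lh) (S \<union> {v}) - reach L S))"
proof -
  let ?gain = "\<lambda>v. reach (L2 E {v} L Lh) (S \<union> {v}) - reach L S"
  have "L2 E T L Lh \<subseteq> V \<times> V" for T using assms(2,3) by (auto simp: L2_def)
  then have fin_reach: "finite (reach (L2 E T L Lh) T')" if "finite T'" for T T'
    by (rule finite_reach) (simp_all add: assms(1) that)
  have "card (reach (L2 E (D \<union> S) L Lh) (D \<union> S))
      \<le> card (reach (L2 E S L Lh) S \<union> (\<Union>v\<in>D - S. ?gain v))"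
    by (rule card_mono[OF _ reach_L2_Un_subset]) (use fin_reach assms(4,5) in auto)
  also have "\<dots> \<le> card (reach (L2 E S L Lh) S) + card (\<Union>v\<in>D - S. ?gain v)"
    by (rule card_Un_le)
  also have "\<dots> \<le> card (reach (L2 E S L Lh) S) + (\<Sum>v\<in>D - S. card (?gain v))"
    using card_UN_le[of "D - S" ?gain] assms(4) by simp
  finally show ?thesis .
qed

lemma sigmaL_L2_Un_le:
  assumes E: "E \<subseteq> {1..n} \<times> {1..n}" and L: "L \<subseteq> E" and D: "D \<subseteq> {1..n}" and S: "S \<subseteq> {1..n}"
  shows "sigmaL (L2 E (D \<union> S) L Lh) (D \<union> S) \<le> sigmaL (L2 E S L Lh) S +
    (\<Sum>v\<in>{1..n} - S. (if v \<in> D then 1 else 0) * (sigmaL (L2 E {v} L Lh) (S \<union> {v}) - sigmaL L S))"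
proof -
  have fin_S: "finite S" and fin_D: "finite D" using S D finite_subset by auto
  have "sigmaL (L2 E (D \<union> S) L Lh) (D \<union> S) \<le> sigmaL (L2 E S L Lh) S +
      (\<Sum>v\<in>D - S. real (card (reach (L2 E {v} L Lh) (S \<union> {v}) - reach L S)))"
    using card_reach_L2_Un_le[OF _ E L fin_D fin_S]
    unfolding sigmaL_def of_nat_sum[symmetric] of_nat_add[symmetric] of_nat_le_iff by simp
  moreover have "real (card (reach (L2 E {v} L Lh) (S \<union> {v}) - reach L S)) =
      sigmaL (L2 E {v} L Lh) (S \<union> {v}) - sigmaL L S" for v
  proof -
    have "reach L S \<subseteq> reach (L2 E {v} L Lh) (S \<union> {v})" by (rule reach_mono) (auto simp: L2_def)
    moreover have "L2 E {v} L Lh \<subseteq> {1..n} \<times> {1..n}" using E L by (auto simp: L2_def)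
    then have "finite (reach (L2 E {v} L Lh) (S \<union> {v}))" by (rule finite_reach) (simp_all add: fin_S)
    ultimately show ?thesis
      unfolding sigmaL_def by (simp add: card_Diff_subset of_nat_diff card_mono finite_subset)
  qed
  moreover have "(\<Sum>v\<in>{1..n} - S. (if v \<in> D then 1 else 0) * g v) = (\<Sum>v\<in>D - S. g v)"
    for g :: "nat \<Rightarrow> real"
  proof -
    have "(\<Sum>v\<in>{1..n} - S. (if v \<in> D then 1 else 0) * g v) =
        (\<Sum>v\<in>{1..n} - S. if v \<in> D then g v else 0)"
      by (rule sum.cong) auto
    also have "\<dots> = (\<Sum>v\<in>({1..n} - S) \<inter> D. g v)" by (rule sum.inter_restrict[symmetric]) simp
    also have "({1..n} - S) \<inter> D = D - S" using D by auto
    finally show ?thesis .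
  qed
  ultimately show ?thesis by simp
qed

lemma expect_selected_mult_out_edges:
  assumes "finite E" and terminates: "\<And>L. L \<subseteq> E \<Longrightarrow> terminates \<pi> L"
    and f: "\<And>L. L \<subseteq> E \<Longrightarrow> f L = f (L \<inter> {(u, w) \<in> E. u = v})"
  shows "expect E p (\<lambda>L. (if v \<in> dom (final_real \<pi> L) then 1 else 0) * f L)
    = sel_prob E p \<pi> v * expect E p f"
proof -
  let ?A = "{(u, w) \<in> E. u = v}"
  have "expect E p (\<lambda>L. f L * (if v \<in> dom (final_real \<pi> L) then 1 else 0))
      = expect E p f * sel_prob E p \<pi> v"
    unfolding sel_prob_def
  proof (rule expect_mult_indep[where A = ?A and h = f, OF assms(1) _ f])
    show "(if v \<in> dom (final_real \<pi> L) then 1 else 0) =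
        (if v \<in> dom (final_real \<pi> (L - ?A)) then 1 else (0::real))" if "L \<subseteq> E" for L
      using selected_cong[of \<pi> L "L - ?A" v] terminates[of L] terminates[of "L - ?A"] that
      by (auto simp: Phi_def)
  qed auto
  then show ?thesis by (simp add: mult_ac)
qed

theorem lemma10:
  fixes n k :: nat and E :: "(nat \<times> nat) set" and p :: "nat \<times> nat \<Rightarrow> real"
    and \<pi> :: policy and S :: "nat set"
  assumes "influence_graph n E p"
    and "2 \<le> k" and "k \<le> n"
    and "optimal_policy n E p k \<pi>"
    and "S \<subseteq> {1..n}"
  shows "expect E p (\<lambda>L. expect E p (\<lambda>Lh.
            sigmaL (L2 E (dom (final_real \<pi> Lh) \<union> S) L Lh) (dom (final_real \<pi> Lh) \<union> S)))
         \<le> sigma2 E p S + (\<Sum>v\<in>{1..n} - S. sel_prob E p \<pi> v * Delta2 E p S v)"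
proof -
  have E: "E \<subseteq> {1..n} \<times> {1..n}" and p: "\<forall>e\<in>E. 0 \<le> p e \<and> p e \<le> 1"
    using assms(1) by (auto simp: influence_graph_def)
  then have "finite E" using finite_subset by blast
  have pol: "is_policy n \<pi>" and terminates: "\<And>L. L \<subseteq> E \<Longrightarrow> terminates \<pi> L"
    using assms(4) by (auto simp: optimal_policy_def policy_size_def)
  define gain where "gain v L Lh = sigmaL (L2 E {v} L Lh) (S \<union> {v}) - sigmaL L S" for v L Lh
  have "expect E p (\<lambda>L. expect E p (\<lambda>Lh.
          sigmaL (L2 E (dom (final_real \<pi> Lh) \<union> S) L Lh) (dom (final_real \<pi> Lh) \<union> S)))
      \<le> expect E p (\<lambda>L. expect E p (\<lambda>Lh. sigmaL (L2 E S L Lh) S +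
          (\<Sum>v\<in>{1..n} - S. (if v \<in> dom (final_real \<pi> Lh) then 1 else 0) * gain v L Lh)))"
    unfolding gain_def
    by (intro expect_mono[OF p] sigmaL_L2_Un_le[OF E _ dom_final_real_subset[OF pol] assms(5)])
  also have "\<dots> = sigma2 E p S + (\<Sum>v\<in>{1..n} - S. expect E p (\<lambda>L.
      expect E p (\<lambda>Lh. (if v \<in> dom (final_real \<pi> Lh) then 1 else 0) * gain v L Lh)))"
    by (simp add: expect_add expect_sum sigma2_def)
  also have "\<dots> = sigma2 E p S + (\<Sum>v\<in>{1..n} - S. sel_prob E p \<pi> v * Delta2 E p S v)"
  proof -
    have "expect E p (\<lambda>Lh. (if v \<in> dom (final_real \<pi> Lh) then 1 else 0) * gain v L Lh)
        = sel_prob E p \<pi> v * expect E p (gain v L)" for v L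
      by (rule expect_selected_mult_out_edges[OF \<open>finite E\<close> terminates];
          simp add: gain_def L2_singleton_Int_out_edges)
    then show ?thesis by (simp add: expect_cmult Delta2_def gain_def[abs_def])
  qed
  finally show ?thesis .
qed

end
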